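(* Let $QF(1)$ be the subgroup of $QF$ consisting of those elements fixing every word that does not begin with the letter $1$. Then $QF(1)\cong QF$, and there is an injective, non-surjective-allowed endomorphism $\theta$ of $QF(1)$ (namely conjugation by $\alpha$) such that $QF$ is isomorphic to the ascending HNN-extension $QF(1)\ast_{\theta,t}=\langle QF(1),t\mid t^{-1}ht=\theta(h),\ h\in QF(1)\rangle$.
   Context: Let $\{0,1\}^*$ be the finite words over $\{0,1\}$, the vertices of the rooted binary tree in which $x$ has children $x0$ and $x1$ (two edge colours). $QV$ is the group of bijections $\tau$ of $\{0,1\}^*$ with $\tau(x0)=\tau(x)0$ and $\tau(x1)=\tau(x)1$ for all but finitely many $x$. Each such $\tau$ induces a homeomorphism $\pi(\tau)$ of $\{0,1\}^{\mathbb N}$ by $\pi(\tau)(\ell\omega)=\tau(\ell)\omega$, for $\ell$ in a finite maximal prefix-antichain $L$ with $\tau(\ell s)=\tau(\ell)s$ for all $\ell\in L$ and words $s$; this gives a homomorphism $\pi$ onto Thompson's group $V$. $F\le V$ is the subgroup of lexicographic-order-preserving elements and $QF=\pi^{-1}(F)$. The element $\alpha\in QF$ is the bijection with $\alpha(\varepsilon)=0$, $\alpha(1)=\varepsilon$, $\alpha(0s)=00s$, $\alpha(10s)=01s$, $\alpha(11s)=1s$ for all words $s$ ($\varepsilon$ the empty word). An HNN-extension is ascending if $\theta$ is injective. *)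

theory Defs
  imports "HOL-Algebra.Algebra"
begin

text \<open>Words over {0,1} are bool lists, with 0 = False and 1 = True.
  Points of Cantor space {0,1}^N are functions nat => bool.\<close>

definition QV :: "(bool list \<Rightarrow> bool list) set" where
  "QV = {\<tau>. bij \<tau> \<and> finite {x. \<exists>b. \<tau> (x @ [b]) \<noteq> \<tau> x @ [b]}}"

definition prepend :: "bool list \<Rightarrow> (nat \<Rightarrow> bool) \<Rightarrow> (nat \<Rightarrow> bool)" where
  "prepend l \<omega> = (\<lambda>i. if i < length l then l ! i else \<omega> (i - length l))"

text \<open>pi(tau)(l omega) = tau(l) omega whenever tau(l s) = tau(l) s for all words s
  (this value does not depend on the choice of the antichain L).\<close>
definition pi_map :: "(bool list \<Rightarrow> bool list) \<Rightarrow> (nat \<Rightarrow> bool) \<Rightarrow> (nat \<Rightarrow> bool)" where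
  "pi_map \<tau> \<omega> = (THE \<eta>. \<exists>l \<omega>'. \<omega> = prepend l \<omega>' \<and> (\<forall>s. \<tau> (l @ s) = \<tau> l @ s)
                         \<and> \<eta> = prepend (\<tau> l) \<omega>')"

definition lex_less :: "(nat \<Rightarrow> bool) \<Rightarrow> (nat \<Rightarrow> bool) \<Rightarrow> bool" where
  "lex_less \<omega> \<eta> \<longleftrightarrow> (\<exists>n. (\<forall>i<n. \<omega> i = \<eta> i) \<and> \<not> \<omega> n \<and> \<eta> n)"

definition QF :: "(bool list \<Rightarrow> bool list) set" where
  "QF = {\<tau> \<in> QV. \<forall>\<omega> \<eta>. lex_less \<omega> \<eta> \<longrightarrow> lex_less (pi_map \<tau> \<omega>) (pi_map \<tau> \<eta>)}"

definition QF1 :: "(bool list \<Rightarrow> bool list) set" where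
  "QF1 = {\<tau> \<in> QF. \<forall>w. (w = [] \<or> hd w = False) \<longrightarrow> \<tau> w = w}"

definition perm_grp :: "(bool list \<Rightarrow> bool list) set \<Rightarrow> (bool list \<Rightarrow> bool list) monoid" where
  "perm_grp S = \<lparr>carrier = S, monoid.mult = (\<circ>), one = id\<rparr>"

fun alpha :: "bool list \<Rightarrow> bool list" where
  "alpha [] = [False]"
| "alpha [True] = []"
| "alpha (False # s) = False # False # s"
| "alpha (True # False # s) = False # True # s"
| "alpha (True # True # s) = True # s"

definition theta :: "(bool list \<Rightarrow> bool list) \<Rightarrow> (bool list \<Rightarrow> bool list)" where
  "theta h = inv_into UNIV alpha \<circ> h \<circ> alpha"

text \<open>Generators: Some h (h in carrier H) and None (the stable letter t).
  A letter (g, b) denotes g if b = False and g^{-1} if b = True.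
  The presented group <H, t | h1 h2 = (h1 h2), t^{-1} h t = theta(h)> is the quotient of the
  monoid of words by the congruence generated by free cancellation and the relators.\<close>

inductive hnn_eq :: "('a, 'm) monoid_scheme \<Rightarrow> ('a \<Rightarrow> 'a)
    \<Rightarrow> ('a option \<times> bool) list \<Rightarrow> ('a option \<times> bool) list \<Rightarrow> bool"
  for H \<theta> where
  refl: "hnn_eq H \<theta> u u"
| sym: "hnn_eq H \<theta> u v \<Longrightarrow> hnn_eq H \<theta> v u"
| trans: "hnn_eq H \<theta> u v \<Longrightarrow> hnn_eq H \<theta> v w \<Longrightarrow> hnn_eq H \<theta> u w"
| cong: "hnn_eq H \<theta> u v \<Longrightarrow> hnn_eq H \<theta> (x @ u @ y) (x @ v @ y)"
| cancel: "hnn_eq H \<theta> [(g, b), (g, \<not> b)] []"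
| mult_rel: "h1 \<in> carrier H \<Longrightarrow> h2 \<in> carrier H \<Longrightarrow>
    hnn_eq H \<theta> [(Some h1, False), (Some h2, False)] [(Some (h1 \<otimes>\<^bsub>H\<^esub> h2), False)]"
| hnn_rel: "h \<in> carrier H \<Longrightarrow>
    hnn_eq H \<theta> [(None, True), (Some h, False), (None, False)] [(Some (\<theta> h), False)]"

definition hnn_words :: "('a, 'm) monoid_scheme \<Rightarrow> ('a option \<times> bool) list set" where
  "hnn_words H = {w. \<forall>(g, b) \<in> set w. g = None \<or> the g \<in> carrier H}"

definition HNN :: "('a, 'm) monoid_scheme \<Rightarrow> ('a \<Rightarrow> 'a)
    \<Rightarrow> (('a option \<times> bool) list set) monoid" where
  "HNN H \<theta> = \<lparr>carrier = {{v. hnn_eq H \<theta> w v} | w. w \<in> hnn_words H},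
              monoid.mult = (\<lambda>A B. {v. \<exists>x\<in>A. \<exists>y\<in>B. hnn_eq H \<theta> (x @ y) v}),
              one = {v. hnn_eq H \<theta> [] v}\<rparr>"

end

theory Submission
  imports Defs
begin

text \<open>Restricting to the subtree below 1 identifies QF(1) with QF, and conjugation by \<alpha>
  embeds QF(1) into itself. Every element g of QF fixes the least point of Cantor space, so it
  carries a long word 0^N rigidly to some 0^a and factors as g = \<alpha>^a h \<alpha>^-b with h in QF(1).
  These factorisations are exactly the normal forms t^a h t^-b of the ascending HNN extension,
  and \<alpha>^a h \<alpha>^-b = 1 forces a = b and h = 1. Hence t \<mapsto> \<alpha> defines an isomorphism from the
  HNN extension onto QF.\<close>

section \<open>Cantor space\<close>

lemma prepend_Nil [simp]: "prepend [] \<omega> = \<omega>"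
  by (simp add: prepend_def)

lemma prepend_append: "prepend (u @ v) \<omega> = prepend u (prepend v \<omega>)"
  by (auto simp: prepend_def nth_append fun_eq_iff)

lemma prepend_Cons: "prepend (b # u) \<omega> = prepend [b] (prepend u \<omega>)"
  using prepend_append[of "[b]" u \<omega>] by simp

lemma prepend_singleton_0 [simp]: "prepend [b] \<omega> 0 = b"
  and prepend_singleton_Suc [simp]: "prepend [b] \<omega> (Suc i) = \<omega> i"
  by (simp_all add: prepend_def)

lemma prepend_singleton_eq_iff [simp]:
  "prepend [b] \<omega> = prepend [c] \<eta> \<longleftrightarrow> b = c \<and> \<omega> = \<eta>"
proof
  assume eq: "prepend [b] \<omega> = prepend [c] \<eta>"
  show "b = c \<and> \<omega> = \<eta>"
    using fun_cong[OF eq, of 0] fun_cong[OF eq, of "Suc i" for i] by (auto simp: fun_eq_iff)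
qed simp

lemma prepend_head_tail: "\<omega> = prepend [\<omega> 0] (\<lambda>i. \<omega> (Suc i))"
  by (auto simp: fun_eq_iff prepend_def)

lemma prepend_take_drop: "prepend (map \<omega> [0..<n]) (\<lambda>i. \<omega> (i + n)) = \<omega>"
  by (auto simp: fun_eq_iff prepend_def)

lemma prepend_eq_prepend_prefixD:
  assumes "length u \<le> length v" "prepend u \<omega> = prepend v \<eta>"
  shows "\<exists>m. v = u @ m \<and> \<omega> = prepend m \<eta>"
  using assms
proof (induction u arbitrary: v)
  case (Cons b u)
  then obtain c v' where "v = c # v'" by (cases v) auto
  with Cons show ?case by (auto simp: prepend_Cons[of b u] prepend_Cons[of c v'])
qed simp

lemma cantor_cases_1:
  obtains \<omega>' where "\<omega> = prepend [False] \<omega>'" | \<omega>' where "\<omega> = prepend [True] \<omega>'"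
  using prepend_head_tail[of \<omega>] by (cases "\<omega> 0") metis+

lemma cantor_cases_2:
  obtains \<omega>' where "\<omega> = prepend [False] \<omega>'"
  | \<omega>' where "\<omega> = prepend [True, False] \<omega>'"
  | \<omega>' where "\<omega> = prepend [True, True] \<omega>'"
proof (cases \<omega> rule: cantor_cases_1)
  case (2 \<omega>')
  then show ?thesis
    using that(2,3) prepend_Cons[of True "[_]"] by (cases \<omega>' rule: cantor_cases_1) auto
qed (use that in blast)

lemma lex_less_prepend_singleton:
  "lex_less (prepend [b] \<omega>) (prepend [c] \<eta>) \<longleftrightarrow> (\<not> b \<and> c) \<or> (b = c \<and> lex_less \<omega> \<eta>)"
proof
  assume "lex_less (prepend [b] \<omega>) (prepend [c] \<eta>)"
  then obtain n where n: "\<forall>i<n. prepend [b] \<omega> i = prepend [c] \<eta> i"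
    "\<not> prepend [b] \<omega> n" "prepend [c] \<eta> n" unfolding lex_less_def by blast
  show "(\<not> b \<and> c) \<or> (b = c \<and> lex_less \<omega> \<eta>)"
  proof (cases n)
    case (Suc m)
    then have "b = c" using n(1) by (metis prepend_singleton_0 zero_less_Suc)
    moreover have "lex_less \<omega> \<eta>" unfolding lex_less_def using n Suc by (intro exI[of _ m]) auto
    ultimately show ?thesis by simp
  qed (use n in simp)
next
  assume "(\<not> b \<and> c) \<or> (b = c \<and> lex_less \<omega> \<eta>)"
  then show "lex_less (prepend [b] \<omega>) (prepend [c] \<eta>)"
  proof
    assume "\<not> b \<and> c"
    then show ?thesis unfolding lex_less_def by (intro exI[of _ 0]) auto
  next
    assume "b = c \<and> lex_less \<omega> \<eta>"
    then obtain n where "b = c" "\<forall>i<n. \<omega> i = \<eta> i" "\<not> \<omega> n" "\<eta> n" unfolding lex_less_def by blast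
    then show ?thesis unfolding lex_less_def by (intro exI[of _ "Suc n"]) (auto simp: less_Suc_eq_0_disj)
  qed
qed

lemma lex_less_irrefl: "\<not> lex_less \<omega> \<omega>"
  unfolding lex_less_def by auto

lemma lex_less_asym: "lex_less \<omega> \<eta> \<Longrightarrow> \<not> lex_less \<eta> \<omega>"
  unfolding lex_less_def by (metis linorder_neqE_nat)

lemma lex_less_linear: "\<omega> \<noteq> \<eta> \<Longrightarrow> lex_less \<omega> \<eta> \<or> lex_less \<eta> \<omega>"
proof -
  assume "\<omega> \<noteq> \<eta>"
  then have ex: "\<exists>n. \<omega> n \<noteq> \<eta> n" by (auto simp: fun_eq_iff)
  define n where "n = (LEAST n. \<omega> n \<noteq> \<eta> n)"
  have "\<omega> n \<noteq> \<eta> n" unfolding n_def by (rule LeastI_ex[OF ex])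
  moreover have "\<forall>i<n. \<omega> i = \<eta> i" unfolding n_def using not_less_Least by blast
  ultimately show ?thesis unfolding lex_less_def by (cases "\<omega> n") auto
qed

lemma lex_less_all_False: "\<not> lex_less \<omega> (\<lambda>_. False)"
  by (simp add: lex_less_def)

lemma lex_less_mono_right_inverse:
  assumes mono: "\<And>\<omega> \<eta>. lex_less \<omega> \<eta> \<Longrightarrow> lex_less (F \<omega>) (F \<eta>)"
    and inverse: "\<And>\<omega>. F (G \<omega>) = \<omega>" and less: "lex_less \<omega> \<eta>"
  shows "lex_less (G \<omega>) (G \<eta>)"
proof (rule ccontr)
  assume "\<not> lex_less (G \<omega>) (G \<eta>)"
  moreover have "G \<omega> \<noteq> G \<eta>" using inverse less lex_less_irrefl by metis
  ultimately have "lex_less (F (G \<eta>)) (F (G \<omega>))" using lex_less_linear mono by blast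
  then show False using inverse less lex_less_asym by simp
qed

section \<open>The groups QV and QF\<close>

lemma bij_comp_inv_into:
  assumes "bij f"
  shows "f \<circ> inv_into UNIV f = id" "inv_into UNIV f \<circ> f = id"
  using assms by (meson bij_is_surj surj_iff, meson bij_is_inj inj_iff)

definition rigid :: "(bool list \<Rightarrow> bool list) \<Rightarrow> bool list \<Rightarrow> bool" where
  "rigid \<tau> u \<longleftrightarrow> (\<forall>s. \<tau> (u @ s) = \<tau> u @ s)"

definition exceptions :: "(bool list \<Rightarrow> bool list) \<Rightarrow> bool list set" where
  "exceptions \<tau> = {x. \<exists>b. \<tau> (x @ [b]) \<noteq> \<tau> x @ [b]}"

lemma QV_iff: "\<tau> \<in> QV \<longleftrightarrow> bij \<tau> \<and> finite (exceptions \<tau>)"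
  by (simp add: QV_def exceptions_def)

lemma QV_eventually_rigid:
  assumes "\<tau> \<in> QV"
  obtains N where "\<And>u. N \<le> length u \<Longrightarrow> rigid \<tau> u"
proof -
  have "finite (length ` exceptions \<tau>)" using assms by (simp add: QV_iff)
  then obtain N where N: "\<And>x. x \<in> exceptions \<tau> \<Longrightarrow> length x < N"
    by (meson finite_nat_set_iff_bounded imageI)
  have "\<tau> (u @ s) = \<tau> u @ s" if "N \<le> length u" for u s
  proof (induction s rule: rev_induct)
    case (snoc b s)
    have "u @ s \<notin> exceptions \<tau>" using N[of "u @ s"] that by auto
    with snoc show ?case by (simp add: exceptions_def)
  qed simp
  then show ?thesis by (intro that[of N]) (simp add: rigid_def)
qed

lemma pi_map_rigid:
  assumes "rigid \<tau> u"
  shows "pi_map \<tau> (prepend u \<omega>) = prepend (\<tau> u) \<omega>"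
  unfolding pi_map_def
proof (rule the_equality)
  fix \<eta> assume "\<exists>u' \<omega>'. prepend u \<omega> = prepend u' \<omega>' \<and> (\<forall>s. \<tau> (u' @ s) = \<tau> u' @ s)
    \<and> \<eta> = prepend (\<tau> u') \<omega>'"
  then obtain u' \<omega>' where eq: "prepend u \<omega> = prepend u' \<omega>'" and "rigid \<tau> u'"
    and \<eta>: "\<eta> = prepend (\<tau> u') \<omega>'" by (auto simp: rigid_def)
  show "\<eta> = prepend (\<tau> u) \<omega>"
  proof (cases "length u \<le> length u'")
    case True
    then obtain m where "u' = u @ m" "\<omega> = prepend m \<omega>'"
      using prepend_eq_prepend_prefixD eq by blast
    then show ?thesis using \<eta> assms by (simp add: rigid_def prepend_append)
  next
    case False
    then obtain m where "u = u' @ m" "\<omega>' = prepend m \<omega>"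
      using prepend_eq_prepend_prefixD eq[symmetric] by (metis nle_le)
    then show ?thesis using \<eta> \<open>rigid \<tau> u'\<close> by (simp add: rigid_def prepend_append)
  qed
qed (use assms in \<open>auto simp: rigid_def\<close>)

lemma QV_rigid_prefix:
  assumes "\<tau> \<in> QV"
  obtains u \<omega>' where "\<omega> = prepend u \<omega>'" "rigid \<tau> u"
proof -
  obtain N where "\<And>u. N \<le> length u \<Longrightarrow> rigid \<tau> u" using QV_eventually_rigid[OF assms] by blast
  then have "rigid \<tau> (map \<omega> [0..<N])" by simp
  then show ?thesis using that prepend_take_drop[of \<omega> N] by metis
qed

lemma QV_id: "id \<in> QV"
  by (simp add: QV_iff exceptions_def)

lemma QV_comp:
  assumes "\<sigma> \<in> QV" "\<tau> \<in> QV"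
  shows "\<sigma> \<circ> \<tau> \<in> QV"
proof -
  have "exceptions (\<sigma> \<circ> \<tau>) \<subseteq> exceptions \<tau> \<union> \<tau> -` exceptions \<sigma>"
    by (auto simp: exceptions_def)
  moreover have "finite (\<tau> -` exceptions \<sigma>)"
    using assms by (intro finite_vimageI) (auto simp: QV_iff bij_def)
  ultimately show ?thesis using assms by (auto simp: QV_iff bij_comp finite_subset)
qed

lemma QV_inv:
  assumes "\<tau> \<in> QV"
  shows "inv_into UNIV \<tau> \<in> QV"
proof -
  have bij: "bij \<tau>" using assms by (simp add: QV_iff)
  have "exceptions (inv_into UNIV \<tau>) \<subseteq> \<tau> ` exceptions \<tau>"
  proof
    fix x assume x: "x \<in> exceptions (inv_into UNIV \<tau>)"
    define y where "y = inv_into UNIV \<tau> x"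
    have "\<tau> y = x" using bij by (simp add: y_def bij_is_surj surj_f_inv_f)
    moreover have "y \<in> exceptions \<tau>"
    proof (rule ccontr)
      assume "y \<notin> exceptions \<tau>"
      then have "\<tau> (y @ [b]) = x @ [b]" for b
        using \<open>\<tau> y = x\<close> by (auto simp: exceptions_def)
      then have "inv_into UNIV \<tau> (x @ [b]) = y @ [b]" for b
        using bij by (metis bij_def inv_f_f)
      then show False using x by (simp add: exceptions_def y_def)
    qed
    ultimately show "x \<in> \<tau> ` exceptions \<tau>" by blast
  qed
  then show ?thesis using assms by (auto simp: QV_iff bij_imp_bij_inv finite_subset)
qed

lemma pi_map_id: "pi_map id \<omega> = \<omega>"
  using pi_map_rigid[of id "[]" \<omega>] by (simp add: rigid_def)

text \<open>Choose a prefix u of \<omega> so long that \<tau> is rigid at u and \<sigma> is rigid at \<tau> u.\<close>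
lemma pi_map_comp:
  assumes "\<sigma> \<in> QV" "\<tau> \<in> QV"
  shows "pi_map (\<sigma> \<circ> \<tau>) \<omega> = pi_map \<sigma> (pi_map \<tau> \<omega>)"
proof -
  obtain M where M: "\<And>u. M \<le> length u \<Longrightarrow> rigid \<tau> u" using QV_eventually_rigid[OF assms(2)] by blast
  obtain N where N: "\<And>u. N \<le> length u \<Longrightarrow> rigid \<sigma> u" using QV_eventually_rigid[OF assms(1)] by blast
  define u where "u = map \<omega> [0..<M + N]"
  define \<omega>' where "\<omega>' = (\<lambda>i. \<omega> (i + (M + N)))"
  have \<omega>: "\<omega> = prepend u \<omega>'" unfolding u_def \<omega>'_def by (rule prepend_take_drop[symmetric])
  have \<tau>u: "rigid \<tau> u" "rigid \<tau> (take M u)" using M by (simp_all add: u_def)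
  then have "\<tau> u = \<tau> (take M u) @ drop M u" unfolding rigid_def by (metis append_take_drop_id)
  then have \<sigma>\<tau>u: "rigid \<sigma> (\<tau> u)" using N by (simp add: u_def)
  then have "rigid (\<sigma> \<circ> \<tau>) u" using \<tau>u by (simp add: rigid_def)
  then show ?thesis unfolding \<omega> by (simp add: pi_map_rigid \<tau>u \<sigma>\<tau>u)
qed

lemma QF_iff: "\<tau> \<in> QF \<longleftrightarrow> \<tau> \<in> QV \<and> (\<forall>\<omega> \<eta>. lex_less \<omega> \<eta> \<longrightarrow> lex_less (pi_map \<tau> \<omega>) (pi_map \<tau> \<eta>))"
  by (simp add: QF_def)

lemma QF_bij: "\<tau> \<in> QF \<Longrightarrow> bij \<tau>"
  by (simp add: QF_iff QV_iff)

lemma QF_id: "id \<in> QF"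
  by (simp add: QF_iff QV_id pi_map_id)

lemma QF_comp: "\<sigma> \<in> QF \<Longrightarrow> \<tau> \<in> QF \<Longrightarrow> \<sigma> \<circ> \<tau> \<in> QF"
  by (simp add: QF_iff QV_comp pi_map_comp)

lemma QF_inv:
  assumes "\<tau> \<in> QF"
  shows "inv_into UNIV \<tau> \<in> QF"
proof -
  have QV: "\<tau> \<in> QV" "inv_into UNIV \<tau> \<in> QV" using assms QV_inv by (auto simp: QF_iff)
  have "\<tau> \<circ> inv_into UNIV \<tau> = id" using bij_comp_inv_into QF_bij[OF assms] by blast
  then have "pi_map \<tau> (pi_map (inv_into UNIV \<tau>) \<omega>) = \<omega>" for \<omega>
    using pi_map_comp[OF QV, of \<omega>] by (simp add: pi_map_id)
  moreover have "lex_less (pi_map \<tau> \<omega>) (pi_map \<tau> \<eta>)" if "lex_less \<omega> \<eta>" for \<omega> \<eta>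
    using assms that by (simp add: QF_iff)
  ultimately show ?thesis
    using QV(2) lex_less_mono_right_inverse[where F = "pi_map \<tau>"] by (simp add: QF_iff)
qed

lemma group_perm_grp:
  assumes "S \<subseteq> {f. bij f}" "id \<in> S" "\<And>f g. f \<in> S \<Longrightarrow> g \<in> S \<Longrightarrow> f \<circ> g \<in> S"
    "\<And>f. f \<in> S \<Longrightarrow> inv_into UNIV f \<in> S"
  shows "group (perm_grp S)"
proof (rule groupI)
  fix f assume "f \<in> carrier (perm_grp S)"
  then have "inv_into UNIV f \<in> S" "inv_into UNIV f \<circ> f = id"
    using assms by (auto simp: perm_grp_def bij_def inj_iff)
  then show "\<exists>g\<in>carrier (perm_grp S). g \<otimes>\<^bsub>perm_grp S\<^esub> f = \<one>\<^bsub>perm_grp S\<^esub>"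
    by (auto simp: perm_grp_def)
qed (use assms in \<open>auto simp: perm_grp_def comp_assoc\<close>)

lemma carrier_perm_grp [simp]: "carrier (perm_grp S) = S"
  and mult_perm_grp [simp]: "f \<otimes>\<^bsub>perm_grp S\<^esub> g = f \<circ> g"
  and one_perm_grp [simp]: "\<one>\<^bsub>perm_grp S\<^esub> = id"
  by (simp_all add: perm_grp_def)

lemma m_inv_perm_grp:
  assumes "group (perm_grp S)" "f \<in> S"
  shows "inv\<^bsub>perm_grp S\<^esub> f = inv_into UNIV f"
  using group.l_inv[OF assms(1), of f] group.r_inv[OF assms(1), of f] assms(2)
  by (simp add: inv_unique_comp)

lemma nat_pow_perm_grp: "f [^]\<^bsub>perm_grp S\<^esub> (n::nat) = f ^^ n"
  by (induction n) (simp_all add: funpow_Suc_right del: funpow.simps)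

lemma group_perm_grp_QF: "group (perm_grp QF)"
  by (rule group_perm_grp) (auto simp: QF_bij QF_id QF_comp QF_inv)

section \<open>The element \<alpha>, the subgroup QF(1) and the endomorphism \<theta>\<close>

fun alpha_inv :: "bool list \<Rightarrow> bool list" where
  "alpha_inv [] = [True]"
| "alpha_inv [False] = []"
| "alpha_inv (False # False # s) = False # s"
| "alpha_inv (False # True # s) = True # False # s"
| "alpha_inv (True # s) = True # True # s"

lemma alpha_alpha_inv [simp]: "alpha (alpha_inv w) = w"
  by (induction w rule: alpha_inv.induct) auto

lemma alpha_inv_alpha [simp]: "alpha_inv (alpha w) = w"
  by (induction w rule: alpha.induct) auto

lemma inv_into_alpha: "inv_into UNIV alpha = alpha_inv"
  by (rule inv_equality) auto

lemma bij_alpha: "bij alpha"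
  by (rule bij_betw_byWitness[where f' = alpha_inv]) auto

lemma alpha_QF: "alpha \<in> QF"
proof -
  have "exceptions alpha \<subseteq> {[], [True]}"
  proof
    fix x assume "x \<in> exceptions alpha"
    then obtain b where "alpha (x @ [b]) \<noteq> alpha x @ [b]" by (auto simp: exceptions_def)
    then show "x \<in> {[], [True]}" by (cases x rule: alpha.cases) auto
  qed
  then have QV: "alpha \<in> QV" using bij_alpha by (simp add: QV_iff finite_subset)
  have "pi_map alpha (prepend [False] \<omega>) = prepend [False, False] \<omega>"
    "pi_map alpha (prepend [True, False] \<omega>) = prepend [False, True] \<omega>"
    "pi_map alpha (prepend [True, True] \<omega>) = prepend [True] \<omega>" for \<omega>
    by (simp_all add: pi_map_rigid rigid_def)
  then have "lex_less (pi_map alpha \<omega>) (pi_map alpha \<eta>)" if "lex_less \<omega> \<eta>" for \<omega> \<eta>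
    using that by (cases \<omega> rule: cantor_cases_2; cases \<eta> rule: cantor_cases_2)
      (simp_all add: lex_less_prepend_singleton prepend_Cons[of _ "[_]"])
  then show ?thesis using QV by (simp add: QF_iff)
qed

lemma alpha_inv_QF: "alpha_inv \<in> QF"
  using QF_inv[OF alpha_QF] by (simp add: inv_into_alpha)

lemma funpow_alpha_QF: "alpha ^^ n \<in> QF"
  and funpow_alpha_inv_QF: "alpha_inv ^^ n \<in> QF"
  by (induction n) (simp_all add: QF_id QF_comp alpha_QF alpha_inv_QF)

lemma funpow_alpha_inv_alpha [simp]: "(alpha_inv ^^ n) ((alpha ^^ n) w) = w"
  and funpow_alpha_alpha_inv [simp]: "(alpha ^^ n) ((alpha_inv ^^ n) w) = w"
  by (induction n arbitrary: w) (simp_all add: funpow_swap1)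

definition outside_1 :: "bool list \<Rightarrow> bool" where
  "outside_1 w \<longleftrightarrow> w = [] \<or> hd w = False"

lemma outside_1_simps [simp]: "outside_1 []" "outside_1 (b # s) \<longleftrightarrow> \<not> b"
  by (auto simp: outside_1_def)

lemma QF1_iff: "\<tau> \<in> QF1 \<longleftrightarrow> \<tau> \<in> QF \<and> (\<forall>w. outside_1 w \<longrightarrow> \<tau> w = w)"
  by (simp add: QF1_def outside_1_def)

lemma QF1_id: "id \<in> QF1"
  by (simp add: QF1_iff QF_id)

lemma QF1_comp: "\<sigma> \<in> QF1 \<Longrightarrow> \<tau> \<in> QF1 \<Longrightarrow> \<sigma> \<circ> \<tau> \<in> QF1"
  by (simp add: QF1_iff QF_comp)

lemma QF1_inv:
  assumes "\<tau> \<in> QF1"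
  shows "inv_into UNIV \<tau> \<in> QF1"
proof -
  have "bij \<tau>" using assms QF_bij by (simp add: QF1_iff)
  then have "inv_into UNIV \<tau> w = w" if "outside_1 w" for w
    using assms that by (metis QF1_iff bij_def inv_f_f)
  then show ?thesis using assms QF_inv by (simp add: QF1_iff)
qed

lemma group_perm_grp_QF1: "group (perm_grp QF1)"
proof (rule group_perm_grp)
  show "QF1 \<subseteq> {f. bij f}" using QF_bij by (auto simp: QF1_def)
qed (simp_all add: QF1_id QF1_comp QF1_inv)

lemma theta_eq: "theta h = alpha_inv \<circ> h \<circ> alpha"
  by (simp add: theta_def inv_into_alpha)

lemma theta_QF1:
  assumes "h \<in> QF1"
  shows "theta h \<in> QF1"
proof -
  have "theta h w = w" if "outside_1 w" for w
    using assms that by (cases w) (auto simp: theta_eq QF1_iff)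
  then show ?thesis using assms by (simp add: QF1_iff theta_eq QF_comp alpha_inv_QF alpha_QF)
qed

lemma theta_hom: "theta \<in> hom (perm_grp QF1) (perm_grp QF1)"
  by (auto simp: hom_def theta_QF1) (simp add: theta_eq fun_eq_iff)

lemma inj_theta: "inj theta"
proof (rule injI)
  fix f g assume "theta f = theta g"
  then have "alpha \<circ> theta f \<circ> alpha_inv = alpha \<circ> theta g \<circ> alpha_inv" by simp
  then show "f = g" by (simp add: theta_eq fun_eq_iff)
qed

section \<open>QF(1) is isomorphic to QF\<close>

lemma bool_list_cases:
  obtains "w = []" | s where "w = False # s" | s where "w = True # s"
  by (metis list.exhaust)

definition restrict_1 :: "(bool list \<Rightarrow> bool list) \<Rightarrow> bool list \<Rightarrow> bool list" where
  "restrict_1 f s = tl (f (True # s))"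

definition extend_1 :: "(bool list \<Rightarrow> bool list) \<Rightarrow> bool list \<Rightarrow> bool list" where
  "extend_1 g w = (case w of [] \<Rightarrow> [] | b # s \<Rightarrow> if b then True # g s else w)"

lemma extend_1_simps [simp]:
  "extend_1 g [] = []" "extend_1 g (False # s) = False # s" "extend_1 g (True # s) = True # g s"
  by (simp_all add: extend_1_def)

lemma restrict_1_extend_1 [simp]: "restrict_1 (extend_1 g) = g"
  by (simp add: restrict_1_def fun_eq_iff)

lemma QF1_Cons_True:
  assumes "f \<in> QF1"
  shows "f (True # s) = True # restrict_1 f s"
proof -
  have "bij f" using assms QF_bij by (simp add: QF1_iff)
  have "\<not> outside_1 (f (True # s))"
  proof
    assume "outside_1 (f (True # s))"
    then have "f (f (True # s)) = f (True # s)" using assms by (simp add: QF1_iff)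
    then have "f (True # s) = True # s" using \<open>bij f\<close> by (metis bij_def injD)
    with \<open>outside_1 (f (True # s))\<close> show False by simp
  qed
  then show ?thesis by (cases "f (True # s)") (auto simp: restrict_1_def)
qed

lemma extend_1_restrict_1:
  assumes "f \<in> QF1"
  shows "extend_1 (restrict_1 f) = f"
proof
  fix w show "extend_1 (restrict_1 f) w = f w"
    using assms QF1_Cons_True[OF assms] by (cases w rule: bool_list_cases) (auto simp: QF1_iff)
qed

lemma extend_1_comp: "extend_1 (f \<circ> g) = extend_1 f \<circ> extend_1 g"
  and extend_1_id: "extend_1 id = id"
  by (auto simp: fun_eq_iff extend_1_def split: list.split)

lemma restrict_1_comp: "f \<in> QF1 \<Longrightarrow> g \<in> QF1 \<Longrightarrow> restrict_1 (f \<circ> g) = restrict_1 f \<circ> restrict_1 g"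
  by (simp add: fun_eq_iff restrict_1_def[of "f \<circ> g"] QF1_Cons_True)

lemma pi_map_extend_1_False: "pi_map (extend_1 g) (prepend [False] \<omega>) = prepend [False] \<omega>"
  using pi_map_rigid[of "extend_1 g" "[False]"] by (simp add: rigid_def)

lemma pi_map_extend_1_True:
  assumes "g \<in> QV"
  shows "pi_map (extend_1 g) (prepend [True] \<omega>) = prepend [True] (pi_map g \<omega>)"
proof -
  obtain u \<omega>' where \<omega>: "\<omega> = prepend u \<omega>'" and "rigid g u" using QV_rigid_prefix[OF assms] .
  then have "rigid (extend_1 g) (True # u)" by (simp add: rigid_def)
  then show ?thesis
    using pi_map_rigid[OF \<open>rigid g u\<close>] pi_map_rigid[of "extend_1 g" "True # u"]
    by (simp add: \<omega> prepend_Cons[of True u] prepend_Cons[of True "g u"])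
qed

lemma extend_1_QV:
  assumes "g \<in> QV"
  shows "extend_1 g \<in> QV"
proof -
  have "bij g" using assms by (simp add: QV_iff)
  then have "extend_1 g \<circ> extend_1 (inv_into UNIV g) = id" "extend_1 (inv_into UNIV g) \<circ> extend_1 g = id"
    by (simp_all add: extend_1_comp[symmetric] extend_1_id bij_comp_inv_into)
  then have "bij (extend_1 g)" using o_bij by blast
  moreover have "exceptions (extend_1 g) \<subseteq> insert [] (Cons True ` exceptions g)"
  proof
    fix x assume "x \<in> exceptions (extend_1 g)"
    then show "x \<in> insert [] (Cons True ` exceptions g)"
      by (cases x rule: bool_list_cases) (auto simp: exceptions_def)
  qed
  ultimately show ?thesis using assms by (auto simp: QV_iff finite_subset)
qed

lemma extend_1_QF1:
  assumes "g \<in> QF"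
  shows "extend_1 g \<in> QF1"
proof -
  have QV: "g \<in> QV" using assms by (simp add: QF_iff)
  have "lex_less (pi_map (extend_1 g) \<omega>) (pi_map (extend_1 g) \<eta>)" if "lex_less \<omega> \<eta>" for \<omega> \<eta>
    using that assms
    by (cases \<omega> rule: cantor_cases_1; cases \<eta> rule: cantor_cases_1)
      (simp_all add: pi_map_extend_1_False pi_map_extend_1_True[OF QV] lex_less_prepend_singleton QF_iff)
  moreover have "extend_1 g w = w" if "outside_1 w" for w
    using that by (cases w rule: bool_list_cases) auto
  ultimately show ?thesis using extend_1_QV[OF QV] by (simp add: QF1_iff QF_iff)
qed

lemma restrict_1_QF:
  assumes "f \<in> QF1"
  shows "restrict_1 f \<in> QF"
proof -
  have QF: "f \<in> QF" "inv_into UNIV f \<in> QF1" using assms QF1_inv by (auto simp: QF1_iff)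
  have "f \<circ> inv_into UNIV f = id" "inv_into UNIV f \<circ> f = id"
    using bij_comp_inv_into[OF QF_bij[OF QF(1)]] by simp_all
  then have "restrict_1 f \<circ> restrict_1 (inv_into UNIV f) = id"
    "restrict_1 (inv_into UNIV f) \<circ> restrict_1 f = id"
    using restrict_1_comp[of f "inv_into UNIV f"] restrict_1_comp[of "inv_into UNIV f" f]
      restrict_1_extend_1[of id] assms QF(2) by (simp_all add: extend_1_id)
  then have "bij (restrict_1 f)" using o_bij by blast
  moreover have "exceptions (restrict_1 f) \<subseteq> Cons True -` exceptions f"
    by (auto simp: exceptions_def QF1_Cons_True[OF assms])
  moreover have "finite (Cons True -` exceptions f)"
    using QF(1) by (intro finite_vimageI) (auto simp: QF_iff QV_iff)
  ultimately have QV: "restrict_1 f \<in> QV" by (auto simp: QV_iff finite_subset)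
  have "pi_map f (prepend [True] \<omega>) = prepend [True] (pi_map (restrict_1 f) \<omega>)" for \<omega>
    using pi_map_extend_1_True[OF QV] extend_1_restrict_1[OF assms] by simp
  moreover have "lex_less (pi_map f \<omega>) (pi_map f \<eta>)" if "lex_less \<omega> \<eta>" for \<omega> \<eta>
    using QF(1) that by (simp add: QF_iff)
  ultimately have "lex_less (pi_map (restrict_1 f) \<omega>) (pi_map (restrict_1 f) \<eta>)" if "lex_less \<omega> \<eta>" for \<omega> \<eta>
    using that lex_less_prepend_singleton[of True _ True] by metis
  then show ?thesis using QV by (simp add: QF_iff)
qed

lemma restrict_1_iso: "restrict_1 \<in> iso (perm_grp QF1) (perm_grp QF)"
proof (unfold iso_iff, intro conjI)
  show "restrict_1 \<in> hom (perm_grp QF1) (perm_grp QF)"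
    by (auto simp: hom_def restrict_1_QF restrict_1_comp)
  have "g \<in> restrict_1 ` QF1" if "g \<in> QF" for g
    using extend_1_QF1[OF that] restrict_1_extend_1[of g] by (metis image_eqI)
  then show "restrict_1 ` carrier (perm_grp QF1) = carrier (perm_grp QF)"
    using restrict_1_QF by auto
  show "inj_on restrict_1 (carrier (perm_grp QF1))"
    by (metis inj_onI carrier_perm_grp extend_1_restrict_1)
qed

section \<open>Ascending HNN extensions\<close>

abbreviation stable_letter :: "'a option \<times> bool" where
  "stable_letter \<equiv> (None, False)"

abbreviation stable_letter_inv :: "'a option \<times> bool" where
  "stable_letter_inv \<equiv> (None, True)"

abbreviation base_letter :: "'a \<Rightarrow> 'a option \<times> bool" where
  "base_letter h \<equiv> (Some h, False)"

definition hnn_class :: "('a, 'm) monoid_scheme \<Rightarrow> ('a \<Rightarrow> 'a) \<Rightarrow> ('a option \<times> bool) list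
    \<Rightarrow> ('a option \<times> bool) list set" where
  "hnn_class H \<theta> w = {v. hnn_eq H \<theta> w v}"

definition hnn_word_inv :: "('a option \<times> bool) list \<Rightarrow> ('a option \<times> bool) list" where
  "hnn_word_inv w = rev (map (\<lambda>(g, b). (g, \<not> b)) w)"

declare hnn_eq.trans [trans]

lemma hnn_eq_append:
  assumes "hnn_eq H \<theta> u u'" "hnn_eq H \<theta> v v'"
  shows "hnn_eq H \<theta> (u @ v) (u' @ v')"
proof -
  have "hnn_eq H \<theta> ([] @ u @ v) ([] @ u' @ v)" "hnn_eq H \<theta> (u' @ v @ []) (u' @ v' @ [])"
    using assms by (simp_all only: hnn_eq.cong)
  then show ?thesis using hnn_eq.trans by simp
qed

lemma hnn_eq_word_inv: "hnn_eq H \<theta> (w @ hnn_word_inv w) []"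
proof (induction w)
  case (Cons x w)
  obtain g b where x: "x = (g, b)" by fastforce
  have "hnn_eq H \<theta> ((x # w) @ hnn_word_inv (x # w)) ([x] @ (w @ hnn_word_inv w) @ [(g, \<not> b)])"
    by (simp add: hnn_word_inv_def x hnn_eq.refl)
  also have "hnn_eq H \<theta> \<dots> ([x] @ [] @ [(g, \<not> b)])" using Cons.IH by (rule hnn_eq.cong)
  also have "hnn_eq H \<theta> \<dots> []" using hnn_eq.cancel[of H \<theta> g b] by (simp add: x)
  finally show ?case .
qed (simp add: hnn_word_inv_def hnn_eq.refl)

lemma hnn_word_inv_hnn_word_inv [simp]: "hnn_word_inv (hnn_word_inv w) = w"
  by (simp add: hnn_word_inv_def rev_map comp_def case_prod_beta)

lemma hnn_words_Nil: "[] \<in> hnn_words H"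
  and hnn_words_append: "u \<in> hnn_words H \<Longrightarrow> v \<in> hnn_words H \<Longrightarrow> u @ v \<in> hnn_words H"
  and hnn_words_word_inv: "w \<in> hnn_words H \<Longrightarrow> hnn_word_inv w \<in> hnn_words H"
  by (auto simp: hnn_words_def hnn_word_inv_def)

lemma hnn_class_eq: "hnn_eq H \<theta> u v \<Longrightarrow> hnn_class H \<theta> u = hnn_class H \<theta> v"
  unfolding hnn_class_def using hnn_eq.trans hnn_eq.sym by blast

lemma carrier_HNN: "carrier (HNN H \<theta>) = hnn_class H \<theta> ` hnn_words H"
  and one_HNN: "\<one>\<^bsub>HNN H \<theta>\<^esub> = hnn_class H \<theta> []"
  by (auto simp: HNN_def hnn_class_def)

lemma mult_HNN: "hnn_class H \<theta> u \<otimes>\<^bsub>HNN H \<theta>\<^esub> hnn_class H \<theta> v = hnn_class H \<theta> (u @ v)"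
proof -
  have "(\<exists>u'\<in>hnn_class H \<theta> u. \<exists>v'\<in>hnn_class H \<theta> v. hnn_eq H \<theta> (u' @ v') w) \<longleftrightarrow> hnn_eq H \<theta> (u @ v) w"
    for w
    by (auto simp: hnn_class_def intro: hnn_eq.refl hnn_eq.trans hnn_eq_append)
  then show ?thesis by (simp add: HNN_def hnn_class_def)
qed

theorem group_HNN: "group (HNN H \<theta>)"
proof (rule groupI)
  fix A assume "A \<in> carrier (HNN H \<theta>)"
  then obtain w where w: "w \<in> hnn_words H" "A = hnn_class H \<theta> w" by (auto simp: carrier_HNN)
  have "hnn_eq H \<theta> (hnn_word_inv w @ w) []"
    using hnn_eq_word_inv[of H \<theta> "hnn_word_inv w"] by simp
  then show "\<exists>B\<in>carrier (HNN H \<theta>). B \<otimes>\<^bsub>HNN H \<theta>\<^esub> A = \<one>\<^bsub>HNN H \<theta>\<^esub>"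
    using w hnn_words_word_inv
    by (intro bexI[of _ "hnn_class H \<theta> (hnn_word_inv w)"]) (auto simp: carrier_HNN mult_HNN one_HNN hnn_class_eq)
qed (auto simp: carrier_HNN mult_HNN one_HNN hnn_words_Nil hnn_words_append)

lemma hnn_eq_infix:
  "hnn_eq H \<theta> u v \<Longrightarrow> L = x @ u @ y \<Longrightarrow> R = x @ v @ y \<Longrightarrow> hnn_eq H \<theta> L R"
  using hnn_eq.cong by blast

definition hnn_normal_form :: "nat \<Rightarrow> 'a \<Rightarrow> nat \<Rightarrow> ('a option \<times> bool) list" where
  "hnn_normal_form a h b = replicate a stable_letter @ base_letter h # replicate b stable_letter_inv"

lemma hnn_normal_form_words: "h \<in> carrier H \<Longrightarrow> hnn_normal_form a h b \<in> hnn_words H"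
  by (auto simp: hnn_normal_form_def hnn_words_def)

lemma hnn_letter_cases:
  obtains (stable) "x = stable_letter" | (stable_inv) "x = stable_letter_inv"
  | (base) h where "x = base_letter h" | (base_inv) h where "x = (Some h, True)"
proof (cases x)
  case (Pair g b)
  then show ?thesis using that by (cases g; cases b) auto
qed

locale ascending_hnn = group H for H (structure) +
  fixes \<theta> :: "'a \<Rightarrow> 'a"
  assumes theta_closed: "h \<in> carrier H \<Longrightarrow> \<theta> h \<in> carrier H"
begin

lemma funpow_theta_closed: "h \<in> carrier H \<Longrightarrow> (\<theta> ^^ n) h \<in> carrier H"
  by (induction n) (simp_all add: theta_closed)

lemma hnn_eq_base_one: "hnn_eq H \<theta> [base_letter \<one>] []"
proof -
  have cancel: "hnn_eq H \<theta> [base_letter \<one>, (Some \<one>, True)] []"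
    using hnn_eq.cancel[of H \<theta> "Some \<one>" False] by simp
  have "hnn_eq H \<theta> [base_letter \<one>] [base_letter \<one>, base_letter \<one>, (Some \<one>, True)]"
    using hnn_eq_infix[OF cancel, of _ "[base_letter \<one>]" "[]"] by (simp add: hnn_eq.sym)
  also have "hnn_eq H \<theta> \<dots> [base_letter \<one>, (Some \<one>, True)]"
    using hnn_eq_infix[OF hnn_eq.mult_rel[of \<one> H \<one>], of _ "[]" "[(Some \<one>, True)]"] by simp
  finally show ?thesis using cancel by (rule hnn_eq.trans)
qed

lemma hnn_eq_base_inv:
  assumes "h \<in> carrier H"
  shows "hnn_eq H \<theta> [(Some h, True)] [base_letter (inv h)]"
proof -
  have cancel: "hnn_eq H \<theta> [(Some h, True), base_letter h] []"
    using hnn_eq.cancel[of H \<theta> "Some h" True] by simp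
  have "hnn_eq H \<theta> [base_letter (inv h)] [(Some h, True), base_letter h, base_letter (inv h)]"
    using hnn_eq_infix[OF cancel, of _ "[]" "[base_letter (inv h)]"] by (simp add: hnn_eq.sym)
  also have "hnn_eq H \<theta> \<dots> [(Some h, True), base_letter \<one>]"
    using hnn_eq_infix[OF hnn_eq.mult_rel[of h H "inv h"], of _ "[(Some h, True)]" "[]"] assms by simp
  also have "hnn_eq H \<theta> \<dots> [(Some h, True)]"
    using hnn_eq_infix[OF hnn_eq_base_one, of _ "[(Some h, True)]" "[]"] by simp
  finally show ?thesis by (rule hnn_eq.sym)
qed

lemma hnn_eq_base_stable:
  assumes "h \<in> carrier H"
  shows "hnn_eq H \<theta> [base_letter h, stable_letter] [stable_letter, base_letter (\<theta> h)]"
proof -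
  have "hnn_eq H \<theta> [stable_letter, base_letter (\<theta> h)]
      [stable_letter, stable_letter_inv, base_letter h, stable_letter]"
    using hnn_eq_infix[OF hnn_eq.hnn_rel[OF assms], of _ "[stable_letter]" "[]"] by (simp add: hnn_eq.sym)
  also have "hnn_eq H \<theta> \<dots> [base_letter h, stable_letter]"
    using hnn_eq_infix[OF hnn_eq.cancel[of H \<theta> None False], of _ "[]" "[base_letter h, stable_letter]"]
    by simp
  finally show ?thesis by (rule hnn_eq.sym)
qed

lemma hnn_eq_stable_inv_base:
  assumes "h \<in> carrier H"
  shows "hnn_eq H \<theta> [stable_letter_inv, base_letter h] [base_letter (\<theta> h), stable_letter_inv]"
proof -
  have "hnn_eq H \<theta> [base_letter (\<theta> h), stable_letter_inv]
      [stable_letter_inv, base_letter h, stable_letter, stable_letter_inv]"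
    using hnn_eq_infix[OF hnn_eq.hnn_rel[OF assms], of _ "[]" "[stable_letter_inv]"] by (simp add: hnn_eq.sym)
  also have "hnn_eq H \<theta> \<dots> [stable_letter_inv, base_letter h]"
    using hnn_eq_infix[OF hnn_eq.cancel[of H \<theta> None False], of _ "[stable_letter_inv, base_letter h]" "[]"]
    by simp
  finally show ?thesis by (rule hnn_eq.sym)
qed

lemma hnn_eq_base_stable_pow:
  assumes "h \<in> carrier H"
  shows "hnn_eq H \<theta> (base_letter h # replicate a stable_letter)
    (replicate a stable_letter @ [base_letter ((\<theta> ^^ a) h)])"
  using assms
proof (induction a arbitrary: h)
  case (Suc a)
  have "hnn_eq H \<theta> (base_letter h # replicate (Suc a) stable_letter)
      (stable_letter # base_letter (\<theta> h) # replicate a stable_letter)"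
    using hnn_eq_infix[OF hnn_eq_base_stable[OF Suc.prems], of _ "[]" "replicate a stable_letter"] by simp
  also have "hnn_eq H \<theta> \<dots> (stable_letter # replicate a stable_letter @ [base_letter ((\<theta> ^^ a) (\<theta> h))])"
    using hnn_eq_infix[OF Suc.IH[OF theta_closed[OF Suc.prems]], of _ "[stable_letter]" "[]"] by simp
  finally show ?case by (simp add: funpow_swap1 replicate_append_same)
qed (simp add: hnn_eq.refl)

lemma hnn_eq_base_normal_form:
  assumes "f \<in> carrier H" "h \<in> carrier H"
  shows "hnn_eq H \<theta> (base_letter f # hnn_normal_form a h b) (hnn_normal_form a ((\<theta> ^^ a) f \<otimes> h) b)"
proof -
  have "(\<theta> ^^ a) f \<in> carrier H" using assms(1) by (rule funpow_theta_closed)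
  have "hnn_eq H \<theta> (base_letter f # hnn_normal_form a h b)
      (replicate a stable_letter @ [base_letter ((\<theta> ^^ a) f)] @ base_letter h # replicate b stable_letter_inv)"
    using hnn_eq_infix[OF hnn_eq_base_stable_pow[OF assms(1), of a], of _ "[]"]
    by (simp add: hnn_normal_form_def)
  also have "hnn_eq H \<theta> \<dots> (hnn_normal_form a ((\<theta> ^^ a) f \<otimes> h) b)"
    using hnn_eq_infix[OF hnn_eq.mult_rel[OF \<open>(\<theta> ^^ a) f \<in> carrier H\<close> assms(2)]]
    by (simp add: hnn_normal_form_def)
  finally show ?thesis .
qed

text \<open>Prepending a letter to t^a h t^-b: a base letter f moves right past t^a as \<theta>^a f, and
  t^-1 either cancels against t or, if a = 0, passes h as \<theta> h.\<close>
theorem hnn_normal_form_exists: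
  assumes "w \<in> hnn_words H"
  obtains a h b where "h \<in> carrier H" "hnn_eq H \<theta> w (hnn_normal_form a h b)"
proof -
  have "\<exists>a h b. h \<in> carrier H \<and> hnn_eq H \<theta> w (hnn_normal_form a h b)"
    using assms
  proof (induction w)
    case Nil
    have "hnn_eq H \<theta> [] (hnn_normal_form 0 \<one> 0)"
      using hnn_eq.sym[OF hnn_eq_base_one] by (simp add: hnn_normal_form_def)
    then show ?case by blast
  next
    case (Cons x w)
    then obtain a h b where h: "h \<in> carrier H" "hnn_eq H \<theta> w (hnn_normal_form a h b)"
      by (auto simp: hnn_words_def)
    have "\<exists>a' h' b'. h' \<in> carrier H \<and> hnn_eq H \<theta> (x # hnn_normal_form a h b) (hnn_normal_form a' h' b')"
    proof (cases x rule: hnn_letter_cases)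
      case stable
      then have "x # hnn_normal_form a h b = hnn_normal_form (Suc a) h b"
        by (simp add: hnn_normal_form_def)
      then have "hnn_eq H \<theta> (x # hnn_normal_form a h b) (hnn_normal_form (Suc a) h b)"
        by (simp add: hnn_eq.refl)
      then show ?thesis using h(1) by blast
    next
      case stable_inv
      show ?thesis
      proof (cases a)
        case 0
        then have "hnn_eq H \<theta> (x # hnn_normal_form a h b) (hnn_normal_form 0 (\<theta> h) (Suc b))"
          using hnn_eq_infix[OF hnn_eq_stable_inv_base[OF h(1)], of _ "[]" "replicate b stable_letter_inv"]
          by (simp add: hnn_normal_form_def stable_inv)
        then show ?thesis using theta_closed[OF h(1)] by blast
      next
        case (Suc a')
        then have "hnn_eq H \<theta> (x # hnn_normal_form a h b) (hnn_normal_form a' h b)"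
          using hnn_eq_infix[OF hnn_eq.cancel[of H \<theta> None True], of _ "[]" "hnn_normal_form a' h b"]
          by (simp add: hnn_normal_form_def stable_inv)
        then show ?thesis using h(1) by blast
      qed
    next
      case (base f)
      then have f: "f \<in> carrier H" using Cons.prems by (auto simp: hnn_words_def)
      then show ?thesis using hnn_eq_base_normal_form[OF f h(1)] base h(1)
        by (blast intro: funpow_theta_closed)
    next
      case (base_inv f)
      then have f: "f \<in> carrier H" using Cons.prems by (auto simp: hnn_words_def)
      have "hnn_eq H \<theta> (x # hnn_normal_form a h b) (base_letter (inv f) # hnn_normal_form a h b)"
        using hnn_eq_infix[OF hnn_eq_base_inv[OF f], of _ "[]" "hnn_normal_form a h b"] base_inv by simp
      also have "hnn_eq H \<theta> \<dots> (hnn_normal_form a ((\<theta> ^^ a) (inv f) \<otimes> h) b)"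
        using hnn_eq_base_normal_form[OF inv_closed[OF f] h(1)] .
      finally have "hnn_eq H \<theta> (x # hnn_normal_form a h b) (hnn_normal_form a ((\<theta> ^^ a) (inv f) \<otimes> h) b)" .
      moreover have "(\<theta> ^^ a) (inv f) \<otimes> h \<in> carrier H"
        using f h(1) by (simp add: funpow_theta_closed)
      ultimately show ?thesis by blast
    qed
    then obtain a' h' b' where "h' \<in> carrier H"
      and eq: "hnn_eq H \<theta> (x # hnn_normal_form a h b) (hnn_normal_form a' h' b')" by blast
    have "hnn_eq H \<theta> (x # w) (x # hnn_normal_form a h b)"
      using hnn_eq_infix[OF h(2), of _ "[x]" "[]"] by simp
    then show ?case using hnn_eq.trans[OF _ eq] \<open>h' \<in> carrier H\<close> by blast
  qed
  then show ?thesis using that by blast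
qed

lemma hnn_eq_normal_form_one: "hnn_eq H \<theta> (hnn_normal_form a \<one> a) []"
proof -
  have "hnn_eq H \<theta> (replicate n stable_letter @ replicate n stable_letter_inv) []" for n
  proof (induction n)
    case (Suc n)
    have "hnn_eq H \<theta> (replicate (Suc n) stable_letter @ replicate (Suc n) stable_letter_inv)
        ([stable_letter] @ [] @ [stable_letter_inv])"
      using hnn_eq_infix[OF Suc.IH, of _ "[stable_letter]" "[stable_letter_inv]"]
      by (simp add: replicate_append_same)
    also have "hnn_eq H \<theta> \<dots> []" using hnn_eq.cancel[of H \<theta> None False] by simp
    finally show ?case .
  qed (simp add: hnn_eq.refl)
  moreover have "hnn_eq H \<theta> (hnn_normal_form a \<one> a) (replicate a stable_letter @ replicate a stable_letter_inv)"
    using hnn_eq_infix[OF hnn_eq_base_one, of _ "replicate a stable_letter" "replicate a stable_letter_inv"]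
    by (simp add: hnn_normal_form_def)
  ultimately show ?thesis by (blast intro: hnn_eq.trans)
qed

end

text \<open>Letters naming no element of H are sent to the unit: the relation cancel applies to them too.\<close>
definition hnn_letter_value :: "('a, 'm) monoid_scheme \<Rightarrow> ('b, 'n) monoid_scheme \<Rightarrow> ('a \<Rightarrow> 'b) \<Rightarrow> 'b
    \<Rightarrow> 'a option \<times> bool \<Rightarrow> 'b" where
  "hnn_letter_value H G f s x =
    (let y = (case fst x of None \<Rightarrow> s | Some h \<Rightarrow> if h \<in> carrier H then f h else \<one>\<^bsub>G\<^esub>)
     in if snd x then inv\<^bsub>G\<^esub> y else y)"

definition hnn_eval :: "('a, 'm) monoid_scheme \<Rightarrow> ('b, 'n) monoid_scheme \<Rightarrow> ('a \<Rightarrow> 'b) \<Rightarrow> 'b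
    \<Rightarrow> ('a option \<times> bool) list \<Rightarrow> 'b" where
  "hnn_eval H G f s w = foldr (\<lambda>x y. hnn_letter_value H G f s x \<otimes>\<^bsub>G\<^esub> y) w \<one>\<^bsub>G\<^esub>"

definition hnn_lift :: "('a, 'm) monoid_scheme \<Rightarrow> ('b, 'n) monoid_scheme \<Rightarrow> ('a \<Rightarrow> 'b) \<Rightarrow> 'b
    \<Rightarrow> ('a option \<times> bool) list set \<Rightarrow> 'b" where
  "hnn_lift H G f s C = hnn_eval H G f s (SOME w. w \<in> C)"

locale hnn_universal = ascending_hnn H \<theta> + G: group G for H (structure) and \<theta> and G (structure) +
  fixes f and s
  assumes f_hom: "f \<in> hom H G" and s_closed: "s \<in> carrier G"
    and conjugation: "h \<in> carrier H \<Longrightarrow> inv\<^bsub>G\<^esub> s \<otimes>\<^bsub>G\<^esub> f h \<otimes>\<^bsub>G\<^esub> s = f (\<theta> h)"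
begin

lemma f_closed: "h \<in> carrier H \<Longrightarrow> f h \<in> carrier G"
  using f_hom by (auto simp: hom_def)

lemma hnn_letter_value_closed: "hnn_letter_value H G f s x \<in> carrier G"
  by (auto simp: hnn_letter_value_def Let_def f_closed s_closed split: option.split)

lemma hnn_eval_closed: "hnn_eval H G f s w \<in> carrier G"
  by (induction w) (simp_all add: hnn_eval_def hnn_letter_value_closed)

lemma hnn_eval_Cons: "hnn_eval H G f s (x # w) = hnn_letter_value H G f s x \<otimes>\<^bsub>G\<^esub> hnn_eval H G f s w"
  by (simp add: hnn_eval_def)

lemma hnn_eval_append: "hnn_eval H G f s (u @ v) = hnn_eval H G f s u \<otimes>\<^bsub>G\<^esub> hnn_eval H G f s v"
  by (induction u) (simp_all add: hnn_eval_Cons hnn_eval_closed hnn_letter_value_closed G.m_assoc,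
      simp add: hnn_eval_def hnn_eval_closed)

theorem hnn_eval_respects_hnn_eq: "hnn_eq H \<theta> u v \<Longrightarrow> hnn_eval H G f s u = hnn_eval H G f s v"
proof (induction rule: hnn_eq.induct)
  case (cong u v x y)
  then show ?case by (simp add: hnn_eval_append)
next
  case (cancel g b)
  then show ?case
    by (auto simp: hnn_eval_def hnn_letter_value_def Let_def f_closed s_closed split: option.split)
next
  case (mult_rel h1 h2)
  then show ?case using f_hom by (simp add: hnn_eval_def hnn_letter_value_def hom_mult f_closed)
next
  case (hnn_rel h)
  then show ?case
    using conjugation[OF hnn_rel] theta_closed[OF hnn_rel]
    by (simp add: hnn_eval_def hnn_letter_value_def f_closed s_closed G.m_assoc)
qed auto

lemma hnn_lift_class: "hnn_lift H G f s (hnn_class H \<theta> w) = hnn_eval H G f s w"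
proof -
  have "w \<in> hnn_class H \<theta> w" by (simp add: hnn_class_def hnn_eq.refl)
  then have "hnn_eq H \<theta> w (SOME v. v \<in> hnn_class H \<theta> w)" by (metis hnn_class_def mem_Collect_eq someI)
  then show ?thesis by (simp add: hnn_lift_def hnn_eval_respects_hnn_eq)
qed

theorem hnn_lift_hom: "hnn_lift H G f s \<in> hom (HNN H \<theta>) G"
  by (auto simp: hom_def carrier_HNN mult_HNN hnn_lift_class hnn_eval_append hnn_eval_closed)

lemma hnn_eval_normal_form:
  assumes "h \<in> carrier H"
  shows "hnn_eval H G f s (hnn_normal_form a h b) = s [^]\<^bsub>G\<^esub> a \<otimes>\<^bsub>G\<^esub> f h \<otimes>\<^bsub>G\<^esub> (inv\<^bsub>G\<^esub> s) [^]\<^bsub>G\<^esub> b"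
proof -
  have "hnn_eval H G f s (replicate n (g, c)) = hnn_letter_value H G f s (g, c) [^]\<^bsub>G\<^esub> n" for g c n
  proof (induction n)
    case (Suc n)
    then show ?case
      using G.nat_pow_Suc2[OF hnn_letter_value_closed] by (simp add: hnn_eval_Cons)
  qed (simp add: hnn_eval_def)
  then show ?thesis using assms
    by (simp add: hnn_normal_form_def hnn_eval_append hnn_eval_Cons hnn_eval_closed f_closed s_closed
        G.m_assoc hnn_letter_value_def)
qed

end

section \<open>QF as an ascending HNN extension of QF(1)\<close>

lemma prepend_all_False_iff:
  "prepend u (\<lambda>_. False) = (\<lambda>_. False) \<longleftrightarrow> u = replicate (length u) False"
proof
  assume eq: "prepend u (\<lambda>_. False) = (\<lambda>_. False)"
  have "\<not> u ! i" if "i < length u" for i using fun_cong[OF eq, of i] that by (simp add: prepend_def)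
  then show "u = replicate (length u) False" by (simp add: list_eq_iff_nth_eq)
next
  assume u: "u = replicate (length u) False"
  show "prepend u (\<lambda>_. False) = (\<lambda>_. False)"
    unfolding fun_eq_iff prepend_def by (subst u) simp
qed

text \<open>The all-False sequence is the least point of Cantor space, and an order-preserving
  bijection fixes the least point.\<close>
lemma pi_map_QF_all_False:
  assumes "g \<in> QF"
  shows "pi_map g (\<lambda>_. False) = (\<lambda>_. False)"
proof -
  let ?\<zeta> = "pi_map (inv_into UNIV g) (\<lambda>_. False)"
  have QV: "g \<in> QV" "inv_into UNIV g \<in> QV" using assms QF_inv by (auto simp: QF_iff)
  have "pi_map g ?\<zeta> = (\<lambda>_. False)"
    using pi_map_comp[OF QV] bij_comp_inv_into[OF QF_bij[OF assms]] by (simp add: pi_map_id)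
  moreover have "?\<zeta> = (\<lambda>_. False)"
  proof (rule ccontr)
    assume "?\<zeta> \<noteq> (\<lambda>_. False)"
    then have "lex_less (\<lambda>_. False) ?\<zeta>" using lex_less_linear lex_less_all_False by blast
    then have "lex_less (pi_map g (\<lambda>_. False)) (pi_map g ?\<zeta>)" using assms by (simp add: QF_iff)
    with \<open>pi_map g ?\<zeta> = (\<lambda>_. False)\<close> show False by (simp add: lex_less_all_False)
  qed
  ultimately show ?thesis by simp
qed

lemma funpow_alpha_outside_1: "outside_1 w \<Longrightarrow> (alpha ^^ n) w = replicate n False @ w"
proof (induction n)
  case (Suc n)
  then show ?case by (cases n; cases w rule: bool_list_cases) auto
qed simp

lemma funpow_alpha_inv_outside_1: "outside_1 w \<Longrightarrow> (alpha_inv ^^ n) (replicate n False @ w) = w"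
  using funpow_alpha_inv_alpha[of n w] by (simp add: funpow_alpha_outside_1)

text \<open>Since g fixes the all-False sequence, it maps a long word 0^N rigidly to some 0^a, so
  \<alpha>^-a g \<alpha>^N fixes every word outside the subtree below 1.\<close>
theorem QF_decomposition:
  assumes "g \<in> QF"
  obtains a h b where "h \<in> QF1" "g = (alpha ^^ a) \<circ> h \<circ> (alpha_inv ^^ b)"
proof -
  obtain N where "\<And>u. N \<le> length u \<Longrightarrow> rigid g u"
    using assms QV_eventually_rigid by (auto simp: QF_iff)
  then have rigid: "rigid g (replicate N False)" by simp
  have "prepend (replicate N False) (\<lambda>_. False) = (\<lambda>_. False)" by (simp add: prepend_all_False_iff)
  then have "prepend (g (replicate N False)) (\<lambda>_. False) = (\<lambda>_. False)"
    using pi_map_rigid[OF rigid, of "\<lambda>_. False"] pi_map_QF_all_False[OF assms] by simp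
  then obtain a where a: "g (replicate N False) = replicate a False" by (metis prepend_all_False_iff)
  define h where "h = (alpha_inv ^^ a) \<circ> g \<circ> (alpha ^^ N)"
  have "h w = w" if "outside_1 w" for w
    using that rigid a by (simp add: h_def rigid_def funpow_alpha_outside_1 funpow_alpha_inv_outside_1)
  then have "h \<in> QF1"
    using assms by (simp add: QF1_iff h_def QF_comp funpow_alpha_QF funpow_alpha_inv_QF)
  moreover have "g = (alpha ^^ a) \<circ> h \<circ> (alpha_inv ^^ N)" by (simp add: h_def fun_eq_iff)
  ultimately show ?thesis using that by blast
qed

lemma QF_decomposition_eq_id:
  assumes "h \<in> QF1" "(alpha ^^ a) \<circ> h \<circ> (alpha_inv ^^ b) = id"
  shows "a = b" "h = id"
proof -
  have eq: "(alpha ^^ a) (h ((alpha_inv ^^ b) w)) = w" for w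
    using fun_cong[OF assms(2), of w] by simp
  have "h [] = []" using assms(1) by (simp add: QF1_iff)
  then have "(alpha ^^ a) [] = (alpha ^^ b) []"
    using eq[of "(alpha ^^ b) []"] by (simp only: funpow_alpha_inv_alpha)
  then show "a = b" using funpow_alpha_outside_1[of "[]"] by simp
  have "h w = w" for w
  proof -
    have "(alpha ^^ a) (h w) = (alpha ^^ a) w"
      using eq[of "(alpha ^^ a) w"] \<open>a = b\<close> by simp
    then have "(alpha_inv ^^ a) ((alpha ^^ a) (h w)) = (alpha_inv ^^ a) ((alpha ^^ a) w)" by simp
    then show ?thesis by simp
  qed
  then show "h = id" by auto
qed

interpretation QF_hnn: hnn_universal "perm_grp QF1" theta "perm_grp QF" id alpha
proof (intro hnn_universal.intro ascending_hnn.intro ascending_hnn_axioms.intro hnn_universal_axioms.intro)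
  show "group (perm_grp QF1)" "group (perm_grp QF)" by (rule group_perm_grp_QF1, rule group_perm_grp_QF)
  show "theta h \<in> carrier (perm_grp QF1)" if "h \<in> carrier (perm_grp QF1)" for h
    using that by (simp add: theta_QF1)
  show "id \<in> hom (perm_grp QF1) (perm_grp QF)" by (auto simp: hom_def QF1_iff)
  show "alpha \<in> carrier (perm_grp QF)" by (simp add: alpha_QF)
  show "inv\<^bsub>perm_grp QF\<^esub> alpha \<otimes>\<^bsub>perm_grp QF\<^esub> id h \<otimes>\<^bsub>perm_grp QF\<^esub> alpha = id (theta h)" for h
    by (simp add: m_inv_perm_grp[OF group_perm_grp_QF alpha_QF] theta_def)
qed

lemma hnn_eval_QF_normal_form:
  assumes "h \<in> QF1"
  shows "hnn_eval (perm_grp QF1) (perm_grp QF) id alpha (hnn_normal_form a h b)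
    = (alpha ^^ a) \<circ> h \<circ> (alpha_inv ^^ b)"
  using QF_hnn.hnn_eval_normal_form[of h a b] assms
  by (simp add: m_inv_perm_grp[OF group_perm_grp_QF alpha_QF] inv_into_alpha nat_pow_perm_grp)

theorem hnn_lift_QF_iso:
  "hnn_lift (perm_grp QF1) (perm_grp QF) id alpha \<in> iso (HNN (perm_grp QF1) theta) (perm_grp QF)"
proof -
  let ?\<psi> = "hnn_lift (perm_grp QF1) (perm_grp QF) id alpha"
  interpret \<psi>: group_hom "HNN (perm_grp QF1) theta" "perm_grp QF" ?\<psi>
    by (simp add: group_hom_def group_hom_axioms_def group_HNN group_perm_grp_QF QF_hnn.hnn_lift_hom)
  have "kernel (HNN (perm_grp QF1) theta) (perm_grp QF) ?\<psi> \<subseteq> {\<one>\<^bsub>HNN (perm_grp QF1) theta\<^esub>}"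
  proof
    fix C assume "C \<in> kernel (HNN (perm_grp QF1) theta) (perm_grp QF) ?\<psi>"
    then obtain w where w: "w \<in> hnn_words (perm_grp QF1)" "C = hnn_class (perm_grp QF1) theta w"
      and "hnn_eval (perm_grp QF1) (perm_grp QF) id alpha w = id"
      by (auto simp: kernel_def carrier_HNN QF_hnn.hnn_lift_class)
    obtain a h b where h: "h \<in> QF1" and nf: "hnn_eq (perm_grp QF1) theta w (hnn_normal_form a h b)"
      using QF_hnn.hnn_normal_form_exists[OF w(1)] by (metis carrier_perm_grp)
    have "(alpha ^^ a) \<circ> h \<circ> (alpha_inv ^^ b) = id"
      using \<open>hnn_eval _ _ _ _ w = id\<close> QF_hnn.hnn_eval_respects_hnn_eq[OF nf] hnn_eval_QF_normal_form[OF h]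
      by simp
    then have "a = b" "h = id" using QF_decomposition_eq_id[OF h] by auto
    then have "hnn_eq (perm_grp QF1) theta w []"
      using nf QF_hnn.hnn_eq_normal_form_one[of a] hnn_eq.trans by auto
    then show "C \<in> {\<one>\<^bsub>HNN (perm_grp QF1) theta\<^esub>}" by (simp add: w(2) one_HNN hnn_class_eq)
  qed
  then have "inj_on ?\<psi> (carrier (HNN (perm_grp QF1) theta))"
    using \<psi>.inj_iff_trivial_ker subgroup.one_closed[OF \<psi>.subgroup_kernel] by blast
  moreover have "g \<in> ?\<psi> ` carrier (HNN (perm_grp QF1) theta)" if g: "g \<in> QF" for g
  proof -
    obtain a h b where h: "h \<in> QF1" "g = (alpha ^^ a) \<circ> h \<circ> (alpha_inv ^^ b)"
      using QF_decomposition[OF g] .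
    then have "g = ?\<psi> (hnn_class (perm_grp QF1) theta (hnn_normal_form a h b))"
      by (simp add: QF_hnn.hnn_lift_class hnn_eval_QF_normal_form)
    moreover have "hnn_normal_form a h b \<in> hnn_words (perm_grp QF1)"
      using h(1) by (simp add: hnn_normal_form_words)
    ultimately show ?thesis by (simp add: carrier_HNN)
  qed
  ultimately show ?thesis
    using QF_hnn.hnn_lift_hom by (auto simp: iso_iff hom_def)
qed

theorem lemma2p7:
  shows "perm_grp QF1 \<cong> perm_grp QF
       \<and> theta \<in> hom (perm_grp QF1) (perm_grp QF1)
       \<and> inj_on theta QF1
       \<and> perm_grp QF \<cong> HNN (perm_grp QF1) theta"
proof (intro conjI)
  show "perm_grp QF1 \<cong> perm_grp QF" using restrict_1_iso by (rule is_isoI)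
  show "theta \<in> hom (perm_grp QF1) (perm_grp QF1)" by (rule theta_hom)
  show "inj_on theta QF1" using inj_theta by (rule inj_on_subset) simp
  show "perm_grp QF \<cong> HNN (perm_grp QF1) theta"
    using group.iso_sym[OF group_HNN is_isoI[OF hnn_lift_QF_iso]] .
qed

end
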